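(* Let $k,l\ge1$ with $k\ne l$, $1\le r\le(2k+1)(2l+1)$, and let $\overline{\mathcal{B}}(2k+1,2l+1;r)$ be the set of boards in $\mathcal{B}(2k+1,2l+1;r)$ whose board partition $\begin{pmatrix}\lambda_1&\lambda_2&\lambda_3&\lambda_4\\ \delta_1&\delta_2&\delta_3&\delta_4\end{pmatrix}_c$ satisfies: (i) $\lambda_1\ge\lambda_i$ for all $i>1$; (ii) if $\lambda_1=\lambda_3$ then $\lambda_2\ge\lambda_4$, if in addition $\lambda_2=\lambda_4$ then $\delta_1\ge\delta_3$, and if further $\delta_1=\delta_3$ then $\delta_2\ge\delta_4$; (iii) if $\lambda_1=\lambda_2$ then $\lambda_3\ge\lambda_4$, and if in addition $\lambda_3=\lambda_4$ then $\delta_2\ge\delta_4$; (iv) if $\lambda_1=\lambda_4$ then $\lambda_2\ge\lambda_3$, and if in addition $\lambda_2=\lambda_3$ then $\delta_1\ge\delta_3$. For a board partition of a board in $\overline{\mathcal{B}}(2k+1,2l+1;r)$, let $K\le\langle H,V\rangle$ be the subgroup of symmetries preserving the set of all boards with that board partition. Then: if $\lambda_1=\lambda_2=\lambda_3=\lambda_4$, $\delta_1=\delta_3$, $\delta_2=\delta_4$: $K=\langle H,V\rangle$, index 1; if $\lambda_1=\lambda_3>\lambda_2=\lambda_4$, $\delta_1=\delta_3$, $\delta_2=\delta_4$: $K=\langle R_{180}\rangle$, index 2; if $\lambda_1=\lambda_2$, $\lambda_3=\lambda_4$, $\delta_2=\delta_4$, and (if $\lambda_2=\lambda_3$ then $\delta_1\ne\delta_3$):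 $K=\langle V\rangle$, index 2; if $\lambda_1=\lambda_4$, $\lambda_2=\lambda_3$, $\delta_1=\delta_3$, and (if $\lambda_2=\lambda_3$ then $\delta_2\ne\delta_4$): $K=\langle H\rangle$, index 2; in all other cases $K$ is trivial, index 4.
   Context: A $(2k+1)\times(2l+1)$ grid ($2k+1$ rows numbered top to bottom, $2l+1$ columns left to right); $\mathcal{B}(2k+1,2l+1;r)$ is the set of boards, i.e. subsets of exactly $r$ blocked cells. $\langle H,V\rangle=\{R_0,H,V,R_{180}\}$ acts on boards ($H$: reflection across the horizontal midline; $V$: across the vertical midline; $R_{180}$: 180-degree rotation). Regions: $\Lambda_1$ = rows $1..k$, cols $1..l$; $\Lambda_2$ = rows $1..k$, cols $l+2..2l+1$; $\Lambda_3$ = rows $k+2..2k+1$, cols $l+2..2l+1$; $\Lambda_4$ = rows $k+2..2k+1$, cols $1..l$; $\Delta_1$ = rows $1..k$, col $l+1$; $\Delta_2$ = row $k+1$, cols $l+2..2l+1$; $\Delta_3$ = rows $k+2..2k+1$, col $l+1$; $\Delta_4$ = row $k+1$, cols $1..l$; center cell $(k+1,l+1)$. The board partition $\begin{pmatrix}\lambda_1&\lambda_2&\lambda_3&\lambda_4\\ \delta_1&\delta_2&\delta_3&\delta_4\end{pmatrix}_c$ records the numbers of blocked cells $\lambda_i$ in $\Lambda_i$, $\delta_i$ in $\Delta_i$, and $c\in\{0,1\}$ at the center. *)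

theory Defs
  imports Main
begin

text \<open>Cells of the (2k+1) x (2l+1) grid are pairs (row, column), rows 1..2k+1 numbered
  top to bottom, columns 1..2l+1 left to right.\<close>

definition grid :: "nat \<Rightarrow> nat \<Rightarrow> (nat \<times> nat) set" where
  "grid k l = {1..2*k+1} \<times> {1..2*l+1}"

definition boards :: "nat \<Rightarrow> nat \<Rightarrow> nat \<Rightarrow> (nat \<times> nat) set set" where
  "boards k l r = {B. B \<subseteq> grid k l \<and> card B = r}"

datatype sym = R0 | H | V | R180

definition HV_group :: "sym set" where
  "HV_group = {R0, H, V, R180}"

fun act_cell :: "nat \<Rightarrow> nat \<Rightarrow> sym \<Rightarrow> nat \<times> nat \<Rightarrow> nat \<times> nat" where
  "act_cell k l R0 (i, j) = (i, j)"
| "act_cell k l H (i, j) = (2*k+2-i, j)"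
| "act_cell k l V (i, j) = (i, 2*l+2-j)"
| "act_cell k l R180 (i, j) = (2*k+2-i, 2*l+2-j)"

definition act_board :: "nat \<Rightarrow> nat \<Rightarrow> sym \<Rightarrow> (nat \<times> nat) set \<Rightarrow> (nat \<times> nat) set" where
  "act_board k l g B = act_cell k l g ` B"

datatype region = Lam1 | Lam2 | Lam3 | Lam4 | Del1 | Del2 | Del3 | Del4 | Ctr

fun region_cells :: "nat \<Rightarrow> nat \<Rightarrow> region \<Rightarrow> (nat \<times> nat) set" where
  "region_cells k l Lam1 = {1..k} \<times> {1..l}"
| "region_cells k l Lam2 = {1..k} \<times> {l+2..2*l+1}"
| "region_cells k l Lam3 = {k+2..2*k+1} \<times> {l+2..2*l+1}"
| "region_cells k l Lam4 = {k+2..2*k+1} \<times> {1..l}"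
| "region_cells k l Del1 = {1..k} \<times> {l+1}"
| "region_cells k l Del2 = {k+1} \<times> {l+2..2*l+1}"
| "region_cells k l Del3 = {k+2..2*k+1} \<times> {l+1}"
| "region_cells k l Del4 = {k+1} \<times> {1..l}"
| "region_cells k l Ctr = {(k+1, l+1)}"

definition board_partition :: "nat \<Rightarrow> nat \<Rightarrow> (nat \<times> nat) set \<Rightarrow> region \<Rightarrow> nat" where
  "board_partition k l B R = card (B \<inter> region_cells k l R)"

definition normalized_partition :: "(region \<Rightarrow> nat) \<Rightarrow> bool" where
  "normalized_partition p \<longleftrightarrow>
     (p Lam1 \<ge> p Lam2 \<and> p Lam1 \<ge> p Lam3 \<and> p Lam1 \<ge> p Lam4)
   \<and> (p Lam1 = p Lam3 \<longrightarrow> p Lam2 \<ge> p Lam4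
        \<and> (p Lam2 = p Lam4 \<longrightarrow> p Del1 \<ge> p Del3
             \<and> (p Del1 = p Del3 \<longrightarrow> p Del2 \<ge> p Del4)))
   \<and> (p Lam1 = p Lam2 \<longrightarrow> p Lam3 \<ge> p Lam4
        \<and> (p Lam3 = p Lam4 \<longrightarrow> p Del2 \<ge> p Del4))
   \<and> (p Lam1 = p Lam4 \<longrightarrow> p Lam2 \<ge> p Lam3
        \<and> (p Lam2 = p Lam3 \<longrightarrow> p Del1 \<ge> p Del3))"

definition Bbar :: "nat \<Rightarrow> nat \<Rightarrow> nat \<Rightarrow> (nat \<times> nat) set set" where
  "Bbar k l r = {B \<in> boards k l r. normalized_partition (board_partition k l B)}"

definition boards_with_partition :: "nat \<Rightarrow> nat \<Rightarrow> nat \<Rightarrow> (region \<Rightarrow> nat) \<Rightarrow> (nat \<times> nat) set set" where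
  "boards_with_partition k l r p = {B \<in> boards k l r. board_partition k l B = p}"

definition stab_group :: "nat \<Rightarrow> nat \<Rightarrow> nat \<Rightarrow> (region \<Rightarrow> nat) \<Rightarrow> sym set" where
  "stab_group k l r p = {g \<in> HV_group.
     act_board k l g ` boards_with_partition k l r p = boards_with_partition k l r p}"

definition sym_index :: "sym set \<Rightarrow> nat" where
  "sym_index K = card HV_group div card K"

end

theory Submission
  imports Defs
begin

text \<open>Each of \<open>H\<close>, \<open>V\<close>, \<open>R180\<close> maps every region of the board partition onto a region, so a
  board with partition \<open>p\<close> is sent to a board whose partition is \<open>p\<close> with its entries permuted.
  As \<open>p\<close> is realised by a board, a symmetry therefore preserves the set of boards with partition
  \<open>p\<close> exactly when \<open>p\<close> is invariant under that permutation, and the five cases only record which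
  of the three invariance conditions hold. Normalisation is used only through \<open>\<lambda>\<^sub>2 \<le> \<lambda>\<^sub>1\<close>: it
  puts an \<open>R180\<close>-invariant partition outside the second case into the first.\<close>

fun sym_region :: "sym \<Rightarrow> region \<Rightarrow> region" where
  "sym_region R0 R = R"
| "sym_region H R = (case R of Lam1 \<Rightarrow> Lam4 | Lam4 \<Rightarrow> Lam1 | Lam2 \<Rightarrow> Lam3 | Lam3 \<Rightarrow> Lam2
     | Del1 \<Rightarrow> Del3 | Del3 \<Rightarrow> Del1 | Del2 \<Rightarrow> Del2 | Del4 \<Rightarrow> Del4 | Ctr \<Rightarrow> Ctr)"
| "sym_region V R = (case R of Lam1 \<Rightarrow> Lam2 | Lam2 \<Rightarrow> Lam1 | Lam3 \<Rightarrow> Lam4 | Lam4 \<Rightarrow> Lam3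
     | Del1 \<Rightarrow> Del1 | Del3 \<Rightarrow> Del3 | Del2 \<Rightarrow> Del4 | Del4 \<Rightarrow> Del2 | Ctr \<Rightarrow> Ctr)"
| "sym_region R180 R = (case R of Lam1 \<Rightarrow> Lam3 | Lam3 \<Rightarrow> Lam1 | Lam2 \<Rightarrow> Lam4 | Lam4 \<Rightarrow> Lam2
     | Del1 \<Rightarrow> Del3 | Del3 \<Rightarrow> Del1 | Del2 \<Rightarrow> Del4 | Del4 \<Rightarrow> Del2 | Ctr \<Rightarrow> Ctr)"

lemma act_cell_in_grid: "x \<in> grid k l \<Longrightarrow> act_cell k l g x \<in> grid k l"
  by (cases x; cases g) (auto simp: grid_def)

lemma act_cell_act_cell: "x \<in> grid k l \<Longrightarrow> act_cell k l g (act_cell k l g x) = x"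
  by (cases x; cases g) (auto simp: grid_def)

lemma inj_on_act_cell: "inj_on (act_cell k l g) (grid k l)"
  by (metis act_cell_act_cell inj_onI)

lemma act_cell_in_region_cells_iff:
  "x \<in> grid k l \<Longrightarrow>
   act_cell k l g x \<in> region_cells k l R \<longleftrightarrow> x \<in> region_cells k l (sym_region g R)"
  by (cases x; cases g; cases R) (auto simp: grid_def)

lemma act_board_act_board:
  assumes "C \<subseteq> grid k l"
  shows "act_board k l g (act_board k l g C) = C"
proof -
  have "act_cell k l g (act_cell k l g x) = x" if "x \<in> C" for x
    using that assms act_cell_act_cell by blast
  then show ?thesis
    unfolding act_board_def image_image by simp
qed

lemma act_board_in_boards: "C \<in> boards k l r \<Longrightarrow> act_board k l g C \<in> boards k l r"
  unfolding boards_def act_board_def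
  using inj_on_subset[OF inj_on_act_cell] act_cell_in_grid by (auto simp: card_image)

lemma board_partition_act_board:
  assumes "C \<subseteq> grid k l"
  shows "board_partition k l (act_board k l g C) = board_partition k l C \<circ> sym_region g"
proof
  fix R
  have "act_board k l g C \<inter> region_cells k l R
      = act_cell k l g ` (C \<inter> region_cells k l (sym_region g R))"
    using assms act_cell_in_region_cells_iff unfolding act_board_def by blast
  moreover have "inj_on (act_cell k l g) (C \<inter> region_cells k l (sym_region g R))"
    using assms by (meson inj_on_act_cell inj_on_subset le_infI1)
  ultimately show "board_partition k l (act_board k l g C) R = (board_partition k l C \<circ> sym_region g) R"
    by (simp add: board_partition_def card_image)
qed

lemma sym_region_sym_region: "sym_region g (sym_region g R) = R"
  by (cases g; cases R) simp_all

lemma image_act_board_boards_with_partition: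
  "act_board k l g ` boards_with_partition k l r p
     = boards_with_partition k l r (p \<circ> sym_region g)"
proof
  show "act_board k l g ` boards_with_partition k l r p \<subseteq> boards_with_partition k l r (p \<circ> sym_region g)"
  proof
    fix D assume "D \<in> act_board k l g ` boards_with_partition k l r p"
    then obtain C where C: "C \<in> boards k l r" "board_partition k l C = p"
      and D: "D = act_board k l g C"
      by (auto simp: boards_with_partition_def)
    have "C \<subseteq> grid k l" using C(1) by (simp add: boards_def)
    then show "D \<in> boards_with_partition k l r (p \<circ> sym_region g)"
      using C D act_board_in_boards
      by (simp add: boards_with_partition_def board_partition_act_board)
  qed
next
  show "boards_with_partition k l r (p \<circ> sym_region g) \<subseteq> act_board k l g ` boards_with_partition k l r p"
  proof
    fix D assume D: "D \<in> boards_with_partition k l r (p \<circ> sym_region g)"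
    then have grid: "D \<subseteq> grid k l" by (simp add: boards_with_partition_def boards_def)
    have "board_partition k l (act_board k l g D) = p \<circ> sym_region g \<circ> sym_region g"
      using D grid by (simp add: boards_with_partition_def board_partition_act_board)
    also have "\<dots> = p" by (simp add: fun_eq_iff sym_region_sym_region)
    finally have "act_board k l g D \<in> boards_with_partition k l r p"
      using D act_board_in_boards by (simp add: boards_with_partition_def)
    moreover have "D = act_board k l g (act_board k l g D)"
      using grid by (simp add: act_board_act_board)
    ultimately show "D \<in> act_board k l g ` boards_with_partition k l r p" by blast
  qed
qed

lemma HV_group_eq_UNIV: "HV_group = UNIV"
  using sym.exhaust by (auto simp: HV_group_def)

lemma stab_group_board_partition:
  assumes "B \<in> boards k l r"
  shows "stab_group k l r (board_partition k l B)
    = {g. board_partition k l B \<circ> sym_region g = board_partition k l B}"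
proof -
  let ?p = "board_partition k l B"
  have "boards_with_partition k l r (?p \<circ> sym_region g) = boards_with_partition k l r ?p
      \<longleftrightarrow> ?p \<circ> sym_region g = ?p" for g
  proof
    assume "boards_with_partition k l r (?p \<circ> sym_region g) = boards_with_partition k l r ?p"
    moreover have "B \<in> boards_with_partition k l r ?p"
      using assms by (simp add: boards_with_partition_def)
    ultimately have "B \<in> boards_with_partition k l r (?p \<circ> sym_region g)" by simp
    then show "?p \<circ> sym_region g = ?p"
      by (simp add: boards_with_partition_def)
  qed simp
  then show ?thesis
    by (simp add: stab_group_def HV_group_eq_UNIV image_act_board_boards_with_partition)
qed

lemma all_region_iff:
  "(\<forall>R. P R) \<longleftrightarrow>
     P Lam1 \<and> P Lam2 \<and> P Lam3 \<and> P Lam4 \<and> P Del1 \<and> P Del2 \<and> P Del3 \<and> P Del4 \<and> P Ctr"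
proof (intro iffI allI)
  fix R
  assume "P Lam1 \<and> P Lam2 \<and> P Lam3 \<and> P Lam4 \<and> P Del1 \<and> P Del2 \<and> P Del3 \<and> P Del4 \<and> P Ctr"
  then show "P R" by (cases R) simp_all
qed simp

lemma comp_sym_region_eq_iff:
  "p \<circ> sym_region R0 = p"
  "p \<circ> sym_region H = p \<longleftrightarrow> p Lam1 = p Lam4 \<and> p Lam2 = p Lam3 \<and> p Del1 = p Del3"
  "p \<circ> sym_region V = p \<longleftrightarrow> p Lam1 = p Lam2 \<and> p Lam3 = p Lam4 \<and> p Del2 = p Del4"
  "p \<circ> sym_region R180 = p \<longleftrightarrow>
     p Lam1 = p Lam3 \<and> p Lam2 = p Lam4 \<and> p Del1 = p Del3 \<and> p Del2 = p Del4"
  by (auto simp: fun_eq_iff all_region_iff)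

lemma stab_group_members:
  assumes "B \<in> boards k l r"
  defines "p \<equiv> board_partition k l B"
  shows "R0 \<in> stab_group k l r p"
    and "H \<in> stab_group k l r p \<longleftrightarrow> p Lam1 = p Lam4 \<and> p Lam2 = p Lam3 \<and> p Del1 = p Del3"
    and "V \<in> stab_group k l r p \<longleftrightarrow> p Lam1 = p Lam2 \<and> p Lam3 = p Lam4 \<and> p Del2 = p Del4"
    and "R180 \<in> stab_group k l r p \<longleftrightarrow>
      p Lam1 = p Lam3 \<and> p Lam2 = p Lam4 \<and> p Del1 = p Del3 \<and> p Del2 = p Del4"
  unfolding p_def stab_group_board_partition[OF assms(1)]
  by (simp_all add: comp_sym_region_eq_iff)

lemma sym_set_eq_iff:
  fixes K S :: "sym set"
  shows "K = S \<longleftrightarrow> (R0 \<in> K \<longleftrightarrow> R0 \<in> S) \<and> (H \<in> K \<longleftrightarrow> H \<in> S)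
    \<and> (V \<in> K \<longleftrightarrow> V \<in> S) \<and> (R180 \<in> K \<longleftrightarrow> R180 \<in> S)"
proof
  assume "(R0 \<in> K \<longleftrightarrow> R0 \<in> S) \<and> (H \<in> K \<longleftrightarrow> H \<in> S)
    \<and> (V \<in> K \<longleftrightarrow> V \<in> S) \<and> (R180 \<in> K \<longleftrightarrow> R180 \<in> S)"
  then show "K = S" by (intro set_eqI) (case_tac x; simp)
qed simp

lemma sym_index_simps:
  "sym_index {R0, H, V, R180} = 1" "sym_index {R0, R180} = 2" "sym_index {R0, V} = 2"
  "sym_index {R0, H} = 2" "sym_index {R0} = 4"
  unfolding sym_index_def HV_group_def by (simp_all, presburger+)

theorem corollary4p8:
  fixes k l r :: nat and B :: "(nat \<times> nat) set"
  assumes "k \<ge> 1" and "l \<ge> 1" and "k \<noteq> l"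
    and "1 \<le> r" and "r \<le> (2*k+1) * (2*l+1)"
    and "B \<in> Bbar k l r"
  defines "p \<equiv> board_partition k l B"
  defines "K \<equiv> stab_group k l r p"
  shows
   "(p Lam1 = p Lam2 \<and> p Lam2 = p Lam3 \<and> p Lam3 = p Lam4 \<and> p Del1 = p Del3 \<and> p Del2 = p Del4
       \<longrightarrow> K = {R0, H, V, R180} \<and> sym_index K = 1)
  \<and> (p Lam1 = p Lam3 \<and> p Lam3 > p Lam2 \<and> p Lam2 = p Lam4 \<and> p Del1 = p Del3 \<and> p Del2 = p Del4
       \<longrightarrow> K = {R0, R180} \<and> sym_index K = 2)
  \<and> (p Lam1 = p Lam2 \<and> p Lam3 = p Lam4 \<and> p Del2 = p Del4 \<and> (p Lam2 = p Lam3 \<longrightarrow> p Del1 \<noteq> p Del3)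
       \<longrightarrow> K = {R0, V} \<and> sym_index K = 2)
  \<and> (p Lam1 = p Lam4 \<and> p Lam2 = p Lam3 \<and> p Del1 = p Del3 \<and> (p Lam1 = p Lam2 \<longrightarrow> p Del2 \<noteq> p Del4)
       \<longrightarrow> K = {R0, H} \<and> sym_index K = 2)
  \<and> (\<not> (p Lam1 = p Lam2 \<and> p Lam2 = p Lam3 \<and> p Lam3 = p Lam4 \<and> p Del1 = p Del3 \<and> p Del2 = p Del4)
     \<and> \<not> (p Lam1 = p Lam3 \<and> p Lam3 > p Lam2 \<and> p Lam2 = p Lam4 \<and> p Del1 = p Del3 \<and> p Del2 = p Del4)
     \<and> \<not> (p Lam1 = p Lam2 \<and> p Lam3 = p Lam4 \<and> p Del2 = p Del4 \<and> (p Lam2 = p Lam3 \<longrightarrow> p Del1 \<noteq> p Del3))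
     \<and> \<not> (p Lam1 = p Lam4 \<and> p Lam2 = p Lam3 \<and> p Del1 = p Del3 \<and> (p Lam1 = p Lam2 \<longrightarrow> p Del2 \<noteq> p Del4))
       \<longrightarrow> K = {R0} \<and> sym_index K = 4)"
proof -
  have B: "B \<in> boards k l r" and lambda2_le: "p Lam2 \<le> p Lam1"
    using assms(6) by (auto simp: Bbar_def normalized_partition_def p_def)
  note members = stab_group_members[OF B, folded p_def, folded K_def]
  note K_eq_iff = sym_set_eq_iff[of K] members
  have with_index: "K = S \<Longrightarrow> sym_index S = n \<Longrightarrow> K = S \<and> sym_index K = n" for S n
    by simp
  show ?thesis (is "_ \<and> _ \<and> _ \<and> _ \<and> (?A5 \<longrightarrow> _)")
  proof (intro with_index conjI impI)
    assume A5: ?A5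
    have "H \<notin> K" using A5 members(2) by argo
    moreover have "V \<notin> K" using A5 members(3) by argo
    moreover have "R180 \<notin> K"
    proof
      assume "R180 \<in> K"
      then have eqs: "p Lam1 = p Lam3" "p Lam2 = p Lam4" "p Del1 = p Del3" "p Del2 = p Del4"
        by (simp_all add: members(4))
      with A5 have "\<not> p Lam2 < p Lam3" by argo
      with eqs lambda2_le have "p Lam2 = p Lam3" by linarith
      with eqs A5 show False by argo
    qed
    ultimately show "K = {R0}" by (simp add: K_eq_iff)
  qed (simp_all add: K_eq_iff sym_index_simps)
qed

end
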